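(* Let $\Gamma$ be a connected directed graph of bounded degree and let $\nu$ be a quasi-cocycle on $\Gamma$ with constants $\Delta>0$, $\eta>0$. Suppose that for every arrow of $\Gamma$ starting at a vertex $v$ and ending at a vertex $u$ we have $\nu(v,u)>2\eta$. Then every (finite or infinite) directed path in $\Gamma$ is a $((\Delta+\eta)/\eta,1)$-quasi-geodesic.
   Context: Distances between vertices of a connected graph are combinatorial (the least number of edges in a connecting path). A function $\nu$ on pairs of vertices of a bounded degree graph $\Gamma$ is a quasi-cocycle with constants $\Delta>0$, $\eta>0$ if $|\nu(v_1,v_2)|\le\Delta$ for all adjacent vertices $v_1,v_2$ and $\nu(v_1,v_2)+\nu(v_2,v_3)-\eta\le\nu(v_1,v_3)\le\nu(v_1,v_2)+\nu(v_2,v_3)+\eta$ for all vertices $v_1,v_2,v_3$. A sequence of points $t_0,t_1,\ldots$ (finite or infinite) of a metric space is a $(\Lambda,\Delta')$-quasi-geodesic if $|t_i-t_{i+1}|\le\Delta'$ and $|i-j|\le\Lambda\cdot|t_i-t_j|$ for all indices $i,j$. A directed path is a sequence of vertices $x_1,x_2,\ldots$ such that each $(x_i,x_{i+1})$ is an arrow. *)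

theory Defs
  imports Complex_Main "HOL-Library.Extended_Nat"
begin

definition adj :: "('a \<times> 'a) set \<Rightarrow> 'a \<Rightarrow> 'a \<Rightarrow> bool" where
  "adj E u v \<longleftrightarrow> (u, v) \<in> E \<or> (v, u) \<in> E"

definition upath :: "('a \<times> 'a) set \<Rightarrow> (nat \<Rightarrow> 'a) \<Rightarrow> nat \<Rightarrow> 'a \<Rightarrow> 'a \<Rightarrow> bool" where
  "upath E p n u v \<longleftrightarrow> p 0 = u \<and> p n = v \<and> (\<forall>i<n. adj E (p i) (p (Suc i)))"

definition digraph :: "'a set \<Rightarrow> ('a \<times> 'a) set \<Rightarrow> bool" where
  "digraph V E \<longleftrightarrow> E \<subseteq> V \<times> V"

definition connected_graph :: "'a set \<Rightarrow> ('a \<times> 'a) set \<Rightarrow> bool" where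
  "connected_graph V E \<longleftrightarrow> V \<noteq> {} \<and> (\<forall>u\<in>V. \<forall>v\<in>V. \<exists>p n. upath E p n u v)"

definition bounded_degree :: "'a set \<Rightarrow> ('a \<times> 'a) set \<Rightarrow> bool" where
  "bounded_degree V E \<longleftrightarrow> (\<exists>D::nat. \<forall>v\<in>V. finite {u. adj E v u} \<and> card {u. adj E v u} \<le> D)"

definition gdist :: "('a \<times> 'a) set \<Rightarrow> 'a \<Rightarrow> 'a \<Rightarrow> nat" where
  "gdist E u v = (LEAST n. \<exists>p. upath E p n u v)"

definition quasi_cocycle ::
  "'a set \<Rightarrow> ('a \<times> 'a) set \<Rightarrow> ('a \<Rightarrow> 'a \<Rightarrow> real) \<Rightarrow> real \<Rightarrow> real \<Rightarrow> bool" where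
  "quasi_cocycle V E \<nu> \<Delta> \<eta> \<longleftrightarrow>
     (\<forall>v1\<in>V. \<forall>v2\<in>V. adj E v1 v2 \<longrightarrow> \<bar>\<nu> v1 v2\<bar> \<le> \<Delta>) \<and>
     (\<forall>v1\<in>V. \<forall>v2\<in>V. \<forall>v3\<in>V.
        \<nu> v1 v2 + \<nu> v2 v3 - \<eta> \<le> \<nu> v1 v3 \<and> \<nu> v1 v3 \<le> \<nu> v1 v2 + \<nu> v2 v3 + \<eta>)"

text \<open>A (finite or infinite) sequence is a map x :: nat \<Rightarrow> 'a together with a
  length N :: enat; its indices are the i with i < N (N = \<infinity> for infinite sequences).\<close>

definition directed_path :: "'a set \<Rightarrow> ('a \<times> 'a) set \<Rightarrow> (nat \<Rightarrow> 'a) \<Rightarrow> enat \<Rightarrow> bool" where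
  "directed_path V E x N \<longleftrightarrow> (\<forall>i. enat i < N \<longrightarrow> x i \<in> V) \<and>
     (\<forall>i. enat (Suc i) < N \<longrightarrow> (x i, x (Suc i)) \<in> E)"

definition quasi_geodesic ::
  "('a \<times> 'a) set \<Rightarrow> real \<Rightarrow> real \<Rightarrow> (nat \<Rightarrow> 'a) \<Rightarrow> enat \<Rightarrow> bool" where
  "quasi_geodesic E \<Lambda> \<Delta>' x N \<longleftrightarrow>
     (\<forall>i. enat (Suc i) < N \<longrightarrow> real (gdist E (x i) (x (Suc i))) \<le> \<Delta>') \<and>
     (\<forall>i j. enat i < N \<longrightarrow> enat j < N \<longrightarrow>
        \<bar>real i - real j\<bar> \<le> \<Lambda> * real (gdist E (x i) (x j)))"

end

theory Submission
  imports Defs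
begin

text \<open>Along an undirected path of length \<open>d\<close> the quasi-cocycle grows by at most \<open>\<Delta> + \<eta>\<close> per
  edge, so \<open>\<nu>(u, v) \<le> d (\<Delta> + \<eta>) + \<eta>\<close>; along a directed path it grows by at least \<open>\<eta>\<close> per
  arrow, because every arrow contributes more than \<open>2\<eta>\<close> and each concatenation loses at most
  \<open>\<eta>\<close>. Comparing both bounds for a geodesic between \<open>x\<^sub>i\<close> and \<open>x\<^sub>j\<close> gives
  \<open>|i - j| \<eta> \<le> d(x\<^sub>i, x\<^sub>j) (\<Delta> + \<eta>)\<close>. Connectedness is only used to make \<open>d(x\<^sub>i, x\<^sub>j)\<close> the
  length of an actual path.\<close>

lemma adj_sym: "adj E u v \<Longrightarrow> adj E v u"
  by (auto simp: adj_def)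

lemma adj_in_vertices: "digraph V E \<Longrightarrow> adj E u v \<Longrightarrow> u \<in> V \<and> v \<in> V"
  by (auto simp: adj_def digraph_def)

lemma upath_rev: "upath E p n u v \<Longrightarrow> upath E (\<lambda>k. p (n - k)) n v u"
  unfolding upath_def
proof (intro conjI allI impI; (elim conjE)?)
  fix i assume steps: "\<forall>i<n. adj E (p i) (p (Suc i))" and "i < n"
  then have "adj E (p (n - Suc i)) (p (Suc (n - Suc i)))" by auto
  moreover have "Suc (n - Suc i) = n - i" using \<open>i < n\<close> by auto
  ultimately show "adj E (p (n - i)) (p (n - Suc i))" by (metis adj_sym)
qed auto

lemma upath_in_vertices:
  assumes "digraph V E" "upath E p n u v" "u \<in> V" "i \<le> n"
  shows "p i \<in> V"
proof (cases i)
  case 0 then show ?thesis using assms by (simp add: upath_def)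
next
  case (Suc k)
  then have "adj E (p k) (p i)" using assms by (simp add: upath_def)
  then show ?thesis using adj_in_vertices[OF assms(1)] by blast
qed

lemma gdist_le_upath: "upath E p n u v \<Longrightarrow> gdist E u v \<le> n"
  unfolding gdist_def by (rule Least_le) blast

lemma upath_gdist:
  assumes "upath E p n u v"
  obtains q where "upath E q (gdist E u v) u v"
proof -
  have "\<exists>q. upath E q (gdist E u v) u v"
    unfolding gdist_def by (rule LeastI[of "\<lambda>n. \<exists>q. upath E q n u v"]) (use assms in blast)
  then show ?thesis using that by blast
qed

lemma gdist_arrow_le_1: "(u, v) \<in> E \<Longrightarrow> gdist E u v \<le> 1"
  by (rule gdist_le_upath[of E "\<lambda>k. if k = 0 then u else v"]) (simp add: upath_def adj_def)

lemma quasi_cocycle_diag_le: "quasi_cocycle V E \<nu> \<Delta> \<eta> \<Longrightarrow> v \<in> V \<Longrightarrow> \<nu> v v \<le> \<eta>"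
  unfolding quasi_cocycle_def by force

lemma quasi_cocycle_upath_le:
  assumes G: "digraph V E" and qc: "quasi_cocycle V E \<nu> \<Delta> \<eta>"
    and path: "upath E p d u v" and "u \<in> V"
  shows "\<nu> u v \<le> real d * (\<Delta> + \<eta>) + \<eta>"
proof -
  have "\<nu> (p 0) (p m) \<le> real m * (\<Delta> + \<eta>) + \<eta>" if "m \<le> d" for m
    using that
  proof (induction m)
    case 0
    then show ?case using quasi_cocycle_diag_le[OF qc] path \<open>u \<in> V\<close> by (simp add: upath_def)
  next
    case (Suc m)
    have in_V: "p i \<in> V" if "i \<le> d" for i
      using upath_in_vertices[OF G path \<open>u \<in> V\<close> that] .
    have "adj E (p m) (p (Suc m))" using path Suc.prems by (simp add: upath_def)
    then have step: "\<nu> (p m) (p (Suc m)) \<le> \<Delta>"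
      using qc in_V Suc.prems unfolding quasi_cocycle_def by (meson Suc_leD abs_le_D1)
    have "\<nu> (p 0) (p (Suc m)) \<le> \<nu> (p 0) (p m) + \<nu> (p m) (p (Suc m)) + \<eta>"
      using qc in_V Suc.prems unfolding quasi_cocycle_def by (meson Suc_leD le0)
    then show ?case using Suc step by (simp add: algebra_simps)
  qed
  from this[of d] show ?thesis using path by (simp add: upath_def)
qed

lemma quasi_cocycle_directed_path_ge:
  assumes qc: "quasi_cocycle V E \<nu> \<Delta> \<eta>"
    and arrow: "\<And>v u. (v, u) \<in> E \<Longrightarrow> \<nu> v u > 2 * \<eta>"
    and dp: "directed_path V E x N" and "enat (i + Suc k) < N"
  shows "\<nu> (x i) (x (i + Suc k)) \<ge> (real k + 2) * \<eta>"
  using \<open>enat (i + Suc k) < N\<close>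
proof (induction k)
  case 0
  then have "(x i, x (i + Suc 0)) \<in> E" using dp by (simp add: directed_path_def)
  then show ?case using arrow by fastforce
next
  case (Suc k)
  have in_V: "x m \<in> V" if "m \<le> i + Suc (Suc k)" for m
    using dp Suc.prems that unfolding directed_path_def by (meson enat_ord_simps(1) le_less_trans)
  have "enat (i + Suc k) < N" using Suc.prems less_trans[of "enat (i + Suc k)" "enat (i + Suc (Suc k))"] by simp
  then have ih: "\<nu> (x i) (x (i + Suc k)) \<ge> (real k + 2) * \<eta>" by (rule Suc.IH)
  have "(x (i + Suc k), x (i + Suc (Suc k))) \<in> E"
    using dp Suc.prems by (simp add: directed_path_def)
  then have step: "\<nu> (x (i + Suc k)) (x (i + Suc (Suc k))) > 2 * \<eta>" by (rule arrow)
  have "\<nu> (x i) (x (i + Suc k)) + \<nu> (x (i + Suc k)) (x (i + Suc (Suc k))) - \<eta>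
      \<le> \<nu> (x i) (x (i + Suc (Suc k)))"
    using qc in_V unfolding quasi_cocycle_def by simp
  then show ?case using ih step by (simp add: algebra_simps)
qed

lemma directed_path_index_gap_le_upath:
  assumes G: "digraph V E" and qc: "quasi_cocycle V E \<nu> \<Delta> \<eta>" and "0 \<le> \<Delta> + \<eta>"
    and arrow: "\<And>v u. (v, u) \<in> E \<Longrightarrow> \<nu> v u > 2 * \<eta>"
    and dp: "directed_path V E x N" and "i \<le> j" "enat j < N"
    and path: "upath E p d (x i) (x j)"
  shows "(real j - real i) * \<eta> \<le> real d * (\<Delta> + \<eta>)"
proof (cases "i = j")
  case True
  then show ?thesis using \<open>0 \<le> \<Delta> + \<eta>\<close> by simp
next
  case False
  define k where "k = j - i - 1"
  have j: "j = i + Suc k" using False \<open>i \<le> j\<close> by (simp add: k_def)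
  have "enat i < N" using \<open>i \<le> j\<close> \<open>enat j < N\<close> le_less_trans[of "enat i" "enat j"] by simp
  then have "x i \<in> V" using dp unfolding directed_path_def by simp
  have "(real k + 2) * \<eta> \<le> \<nu> (x i) (x j)"
    using quasi_cocycle_directed_path_ge[OF qc arrow dp] \<open>enat j < N\<close> j by simp
  also have "\<dots> \<le> real d * (\<Delta> + \<eta>) + \<eta>"
    using quasi_cocycle_upath_le[OF G qc path \<open>x i \<in> V\<close>] .
  finally show ?thesis using j by (simp add: algebra_simps)
qed

lemma directed_path_index_gap_le_gdist:
  assumes G: "digraph V E" and conn: "connected_graph V E"
    and qc: "quasi_cocycle V E \<nu> \<Delta> \<eta>" and "0 \<le> \<Delta> + \<eta>"
    and arrow: "\<And>v u. (v, u) \<in> E \<Longrightarrow> \<nu> v u > 2 * \<eta>"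
    and dp: "directed_path V E x N" and "enat i < N" "enat j < N"
  shows "\<bar>real i - real j\<bar> * \<eta> \<le> real (gdist E (x i) (x j)) * (\<Delta> + \<eta>)"
proof -
  have "x i \<in> V" "x j \<in> V" using dp assms(7,8) by (simp_all add: directed_path_def)
  then obtain p where path: "upath E p (gdist E (x i) (x j)) (x i) (x j)"
    using conn upath_gdist unfolding connected_graph_def by meson
  have gap: "(real j' - real i') * \<eta> \<le> real d * (\<Delta> + \<eta>)"
    if "i' \<le> j'" "enat j' < N" "upath E q d (x i') (x j')" for i' j' q d
    using directed_path_index_gap_le_upath[OF G qc \<open>0 \<le> \<Delta> + \<eta>\<close> _ dp that] arrow by blast
  show ?thesis
  proof (cases "i \<le> j")
    case True
    then show ?thesis using gap[OF True \<open>enat j < N\<close> path] by simp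
  next
    case False
    then show ?thesis using gap[OF _ \<open>enat i < N\<close> upath_rev[OF path]] by simp
  qed
qed

theorem lemma1p2p14:
  fixes V :: "'a set" and E :: "('a \<times> 'a) set" and \<nu> :: "'a \<Rightarrow> 'a \<Rightarrow> real"
    and \<Delta> \<eta> :: real
  assumes "digraph V E"
    and "connected_graph V E"
    and "bounded_degree V E"
    and "\<Delta> > 0" and "\<eta> > 0"
    and "quasi_cocycle V E \<nu> \<Delta> \<eta>"
    and "\<And>v u. (v, u) \<in> E \<Longrightarrow> \<nu> v u > 2 * \<eta>"
  shows "\<forall>x N. directed_path V E x N \<longrightarrow> quasi_geodesic E ((\<Delta> + \<eta>) / \<eta>) 1 x N"
proof (intro allI impI)
  fix x N assume dp: "directed_path V E x N"
  have "\<bar>real i - real j\<bar> \<le> (\<Delta> + \<eta>) / \<eta> * real (gdist E (x i) (x j))"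
    if "enat i < N" "enat j < N" for i j
    using directed_path_index_gap_le_gdist[OF assms(1,2,6) _ assms(7) dp that] assms(4,5)
    by (simp add: field_simps)
  moreover have "real (gdist E (x i) (x (Suc i))) \<le> 1" if "enat (Suc i) < N" for i
    using gdist_arrow_le_1 dp that unfolding directed_path_def by fastforce
  ultimately show "quasi_geodesic E ((\<Delta> + \<eta>) / \<eta>) 1 x N"
    unfolding quasi_geodesic_def by blast
qed

end
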